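(* Let $\mathcal F'=(\mathcal A',U,\varphi)$ be a tree weakening of a sequential formalism $\mathcal F=(\mathcal A,U,\varphi)$. If every algebraically closed scenario for $\mathcal F$ is satisfiable, then every algebraically closed scenario for $\mathcal F'$ is satisfiable.
   Context: A finite non-associative algebra is a tuple $(\mathcal A,\cup,\neg,\emptyset,\mathcal B,\diamond,\overline{\cdot},e)$ where $(\mathcal A,\cup,\neg,\emptyset,\mathcal B)$ is a finite Boolean algebra and for all $x,y,z$: $\overline{\overline x}=x$, $\overline{x\cup y}=\overline x\cup\overline y$, $\overline{x\diamond y}=\overline y\diamond\overline x$, $e\diamond x=x\diamond e=x$, $x\diamond(y\cup z)=(x\diamond y)\cup(x\diamond z)$, $(x\diamond y)\cap\overline z=\emptyset\iff(y\diamond z)\cap\overline x=\emptyset$. $r\subseteq r'$ means $r\cup r'=r'$; atoms are basic relations; $\mathsf B_i$ denotes the atoms of $\mathcal A_i$. A projection operator from $\mathcal A$ to $\mathcal A'$ is a map $\Rsh$ with $\Rsh(r\cup r')=\Rsh r\cup\Rsh r'$ and $\Rsh\overline r=\overline{\Rsh r}$. A finite multi-algebra is a product $\mathcal A_1\times\cdots\times\mathcal A_m$ of finite non-associative algebras with projection operators $\Rsh_i^j:\mathcal A_i\to\mathcal A_j$ for distinct $i,j$; operations and $\subseteq$ componentwise; universal $\mathcal B=(\mathcal B_1,\dots,\mathcal B_m)$; $R$ basic if all $R_i$ atoms; $B\in R$ means $B$ basic, $B\subseteq R$; $R$ closed under projection if $R_j\subseteq\Rsh_i^jR_i$ for all distinct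 $i,j$; projection closure $\Rsh R$: repeatedly replace $R_j$ by $R_j\cap\Rsh_i^jR_i$ to a fixed point. A sequential formalism is $(\mathcal A,U,\varphi)$ with $\mathcal A$ a finite multi-algebra, $U\ne\emptyset$, $\varphi:\mathcal A\to 2^{U\times U}$ satisfying $\varphi(\Rsh R)=\varphi(R)$, $\varphi(\overline R)=\varphi(R)^{-1}$, $\varphi((\emptyset,\dots,\emptyset))=\emptyset$, $\varphi(R\diamond R')\supseteq(\varphi(R)\circ\varphi(R'))\cap\varphi(\mathcal B)$, $\varphi(R\cap R')=\varphi(R)\cap\varphi(R')$, $\varphi(R)=\bigcup_{B\in R}\varphi(B)$. A network is a finite set $E$ of variables with $N^{xy}$ for distinct $x,y$, $N^{yx}=\overline{N^{xy}}$; a scenario if all $N^{xy}$ basic; satisfiable if some $(u_x)\subseteq U$ has $(u_x,u_y)\in\varphi(N^{xy})$ for all distinct $x,y$; algebraically closed (for a multi-algebra) if $N^{xz}\subseteq N^{xy}\diamond N^{yz}$ for all distinct $x,y,z$ and every $N^{xy}$ is closed under projection (for that multi-algebra's projections). Inverse projection $\check\Rsh_i^j:\mathcal A_j\to\mathcal A_i$: for $b\in\mathsf B_i$, $b'\in\mathsf B_j$, $b\subseteq\check\Rsh_i^jb'\iff b'\subseteq\Rsh_i^jb$. An anti-tree structure on $V$ is a directed graph with a root $r$ such that every $v\ne r$ has exactly one directed path to $r$. A plenary anti-tree structure of $\mathcal A$ is an anti-tree structure $\mathtt A$ on $\{1,\dots,m\}$ such that for all distinct $i,j$, with $i=k_0\to\cdots\to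 k_s\leftarrow\cdots\leftarrow k_{s+t+1}=j$ the shortest oriented chain between them, every $b\in\mathsf B_i$ satisfies $\Rsh_i^jb\supseteq\check\Rsh_j^{k_{s+t}}\cdots\check\Rsh_{k_{s+1}}^{k_s}\Rsh_{k_{s-1}}^{k_s}\cdots\Rsh_i^{k_1}b$; $\mathcal A$ is a tree multi-algebra if it has one. $\mathcal A'$ is a weakening of $\mathcal A$ if it has the same algebras and operations and $\Rsh_i^jb\subseteq\Rsh_i'^jb$ for all distinct $i,j$ and atoms $b$ of $\mathcal A_i$; a tree weakening of a tree multi-algebra $\mathcal A$ if moreover, for some plenary anti-tree structure $\mathtt A$ of $\mathcal A$, $\Rsh_i^jb=\Rsh_i'^jb$ whenever $i\to j$ is an edge of $\mathtt A$. $(\mathcal A',U,\varphi)$ is then a (tree) weakening of $(\mathcal A,U,\varphi)$. *)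

theory Defs
  imports Main
begin

(* Convention: every finite Boolean algebra is represented as the powerset of its
   (finite) set of atoms B; elements are subsets of B, union is \<union>, complement is
   relative to B, \<emptyset> is {} and the top element is B.  Atoms are the singletons {b}.
   The m component algebras of a multi-algebra are indexed by 0..<m. *)

definition nalg :: "'b set \<Rightarrow> ('b set \<Rightarrow> 'b set) \<Rightarrow> ('b set \<Rightarrow> 'b set \<Rightarrow> 'b set) \<Rightarrow> 'b set \<Rightarrow> bool" where
  "nalg B cv cp e \<longleftrightarrow>
     finite B \<and> e \<subseteq> B \<and>
     (\<forall>x. x \<subseteq> B \<longrightarrow> cv x \<subseteq> B) \<and>
     (\<forall>x y. x \<subseteq> B \<longrightarrow> y \<subseteq> B \<longrightarrow> cp x y \<subseteq> B) \<and>
     (\<forall>x. x \<subseteq> B \<longrightarrow> cv (cv x) = x) \<and>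
     (\<forall>x y. x \<subseteq> B \<longrightarrow> y \<subseteq> B \<longrightarrow> cv (x \<union> y) = cv x \<union> cv y) \<and>
     (\<forall>x y. x \<subseteq> B \<longrightarrow> y \<subseteq> B \<longrightarrow> cv (cp x y) = cp (cv y) (cv x)) \<and>
     (\<forall>x. x \<subseteq> B \<longrightarrow> cp e x = x \<and> cp x e = x) \<and>
     (\<forall>x y z. x \<subseteq> B \<longrightarrow> y \<subseteq> B \<longrightarrow> z \<subseteq> B \<longrightarrow> cp x (y \<union> z) = cp x y \<union> cp x z) \<and>
     (\<forall>x y z. x \<subseteq> B \<longrightarrow> y \<subseteq> B \<longrightarrow> z \<subseteq> B \<longrightarrow>
        (cp x y \<inter> cv z = {} \<longleftrightarrow> cp y z \<inter> cv x = {}))"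

definition projop :: "'b set \<Rightarrow> 'b set \<Rightarrow> ('b set \<Rightarrow> 'b set) \<Rightarrow> ('b set \<Rightarrow> 'b set) \<Rightarrow> ('b set \<Rightarrow> 'b set) \<Rightarrow> bool" where
  "projop Bi Bj cvi cvj p \<longleftrightarrow>
     (\<forall>r. r \<subseteq> Bi \<longrightarrow> p r \<subseteq> Bj) \<and>
     (\<forall>r r'. r \<subseteq> Bi \<longrightarrow> r' \<subseteq> Bi \<longrightarrow> p (r \<union> r') = p r \<union> p r') \<and>
     (\<forall>r. r \<subseteq> Bi \<longrightarrow> p (cvi r) = cvj (p r))"

definition multialg :: "nat \<Rightarrow> (nat \<Rightarrow> 'b set) \<Rightarrow> (nat \<Rightarrow> 'b set \<Rightarrow> 'b set) \<Rightarrow>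
    (nat \<Rightarrow> 'b set \<Rightarrow> 'b set \<Rightarrow> 'b set) \<Rightarrow> (nat \<Rightarrow> 'b set) \<Rightarrow> (nat \<Rightarrow> nat \<Rightarrow> 'b set \<Rightarrow> 'b set) \<Rightarrow> bool" where
  "multialg m At cv cp e pr \<longleftrightarrow>
     (\<forall>i<m. nalg (At i) (cv i) (cp i) (e i)) \<and>
     (\<forall>i<m. \<forall>j<m. i \<noteq> j \<longrightarrow> projop (At i) (At j) (cv i) (cv j) (pr i j))"

(* elements of the multi-algebra: tuples (R_0,...,R_{m-1}), extended by {} beyond m *)
definition mcarrier :: "nat \<Rightarrow> (nat \<Rightarrow> 'b set) \<Rightarrow> (nat \<Rightarrow> 'b set) \<Rightarrow> bool" where
  "mcarrier m At R \<longleftrightarrow> (\<forall>i<m. R i \<subseteq> At i) \<and> (\<forall>i. m \<le> i \<longrightarrow> R i = {})"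

definition mcv :: "nat \<Rightarrow> (nat \<Rightarrow> 'b set \<Rightarrow> 'b set) \<Rightarrow> (nat \<Rightarrow> 'b set) \<Rightarrow> (nat \<Rightarrow> 'b set)" where
  "mcv m cv R = (\<lambda>i. if i < m then cv i (R i) else {})"

definition mcp :: "nat \<Rightarrow> (nat \<Rightarrow> 'b set \<Rightarrow> 'b set \<Rightarrow> 'b set) \<Rightarrow> (nat \<Rightarrow> 'b set) \<Rightarrow> (nat \<Rightarrow> 'b set) \<Rightarrow> (nat \<Rightarrow> 'b set)" where
  "mcp m cp R S = (\<lambda>i. if i < m then cp i (R i) (S i) else {})"

definition minter :: "(nat \<Rightarrow> 'b set) \<Rightarrow> (nat \<Rightarrow> 'b set) \<Rightarrow> (nat \<Rightarrow> 'b set)" where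
  "minter R S = (\<lambda>i. R i \<inter> S i)"

definition msub :: "(nat \<Rightarrow> 'b set) \<Rightarrow> (nat \<Rightarrow> 'b set) \<Rightarrow> bool" where
  "msub R S \<longleftrightarrow> (\<forall>i. R i \<subseteq> S i)"

definition mempty :: "nat \<Rightarrow> 'b set" where
  "mempty = (\<lambda>i. {})"

definition muniv :: "nat \<Rightarrow> (nat \<Rightarrow> 'b set) \<Rightarrow> (nat \<Rightarrow> 'b set)" where
  "muniv m At = (\<lambda>i. if i < m then At i else {})"

definition mbasic :: "nat \<Rightarrow> (nat \<Rightarrow> 'b set) \<Rightarrow> (nat \<Rightarrow> 'b set) \<Rightarrow> bool" where
  "mbasic m At R \<longleftrightarrow> mcarrier m At R \<and> (\<forall>i<m. \<exists>b\<in>At i. R i = {b})"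

definition closed_proj :: "nat \<Rightarrow> (nat \<Rightarrow> nat \<Rightarrow> 'b set \<Rightarrow> 'b set) \<Rightarrow> (nat \<Rightarrow> 'b set) \<Rightarrow> bool" where
  "closed_proj m pr R \<longleftrightarrow> (\<forall>i<m. \<forall>j<m. i \<noteq> j \<longrightarrow> R j \<subseteq> pr i j (R i))"

(* projection closure: the fixed point reached by repeatedly replacing R_j by
   R_j \<inter> pr i j R_i, i.e. the greatest fixed point of this refinement below R *)
definition pclos :: "nat \<Rightarrow> (nat \<Rightarrow> nat \<Rightarrow> 'b set \<Rightarrow> 'b set) \<Rightarrow> (nat \<Rightarrow> 'b set) \<Rightarrow> (nat \<Rightarrow> 'b set)" where
  "pclos m pr R = gfp (\<lambda>S j. R j \<inter> (\<Inter>i\<in>{i. i < m \<and> i \<noteq> j}. pr i j (S i)))"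

definition seqf :: "nat \<Rightarrow> (nat \<Rightarrow> 'b set) \<Rightarrow> (nat \<Rightarrow> 'b set \<Rightarrow> 'b set) \<Rightarrow>
    (nat \<Rightarrow> 'b set \<Rightarrow> 'b set \<Rightarrow> 'b set) \<Rightarrow> (nat \<Rightarrow> 'b set) \<Rightarrow> (nat \<Rightarrow> nat \<Rightarrow> 'b set \<Rightarrow> 'b set) \<Rightarrow>
    'u set \<Rightarrow> ((nat \<Rightarrow> 'b set) \<Rightarrow> ('u \<times> 'u) set) \<Rightarrow> bool" where
  "seqf m At cv cp e pr U \<phi> \<longleftrightarrow>
     multialg m At cv cp e pr \<and> U \<noteq> {} \<and>
     (\<forall>R. mcarrier m At R \<longrightarrow> \<phi> R \<subseteq> U \<times> U) \<and>
     (\<forall>R. mcarrier m At R \<longrightarrow> \<phi> (pclos m pr R) = \<phi> R) \<and>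
     (\<forall>R. mcarrier m At R \<longrightarrow> \<phi> (mcv m cv R) = (\<phi> R)\<inverse>) \<and>
     \<phi> mempty = {} \<and>
     (\<forall>R R'. mcarrier m At R \<longrightarrow> mcarrier m At R' \<longrightarrow>
        (\<phi> R O \<phi> R') \<inter> \<phi> (muniv m At) \<subseteq> \<phi> (mcp m cp R R')) \<and>
     (\<forall>R R'. mcarrier m At R \<longrightarrow> mcarrier m At R' \<longrightarrow>
        \<phi> (minter R R') = \<phi> R \<inter> \<phi> R') \<and>
     (\<forall>R. mcarrier m At R \<longrightarrow> \<phi> R = (\<Union>B\<in>{B. mbasic m At B \<and> msub B R}. \<phi> B))"

definition network :: "nat \<Rightarrow> (nat \<Rightarrow> 'b set) \<Rightarrow> (nat \<Rightarrow> 'b set \<Rightarrow> 'b set) \<Rightarrow>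
    nat set \<Rightarrow> (nat \<Rightarrow> nat \<Rightarrow> (nat \<Rightarrow> 'b set)) \<Rightarrow> bool" where
  "network m At cv E N \<longleftrightarrow> finite E \<and>
     (\<forall>x\<in>E. \<forall>y\<in>E. x \<noteq> y \<longrightarrow> mcarrier m At (N x y) \<and> N y x = mcv m cv (N x y))"

definition scenario :: "nat \<Rightarrow> (nat \<Rightarrow> 'b set) \<Rightarrow> (nat \<Rightarrow> 'b set \<Rightarrow> 'b set) \<Rightarrow>
    nat set \<Rightarrow> (nat \<Rightarrow> nat \<Rightarrow> (nat \<Rightarrow> 'b set)) \<Rightarrow> bool" where
  "scenario m At cv E N \<longleftrightarrow> network m At cv E N \<and>
     (\<forall>x\<in>E. \<forall>y\<in>E. x \<noteq> y \<longrightarrow> mbasic m At (N x y))"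

definition satisfiable :: "'u set \<Rightarrow> ((nat \<Rightarrow> 'b set) \<Rightarrow> ('u \<times> 'u) set) \<Rightarrow>
    nat set \<Rightarrow> (nat \<Rightarrow> nat \<Rightarrow> (nat \<Rightarrow> 'b set)) \<Rightarrow> bool" where
  "satisfiable U \<phi> E N \<longleftrightarrow>
     (\<exists>u. (\<forall>x\<in>E. u x \<in> U) \<and> (\<forall>x\<in>E. \<forall>y\<in>E. x \<noteq> y \<longrightarrow> (u x, u y) \<in> \<phi> (N x y)))"

definition alg_closed :: "nat \<Rightarrow> (nat \<Rightarrow> 'b set \<Rightarrow> 'b set \<Rightarrow> 'b set) \<Rightarrow> (nat \<Rightarrow> nat \<Rightarrow> 'b set \<Rightarrow> 'b set) \<Rightarrow>
    nat set \<Rightarrow> (nat \<Rightarrow> nat \<Rightarrow> (nat \<Rightarrow> 'b set)) \<Rightarrow> bool" where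
  "alg_closed m cp pr E N \<longleftrightarrow>
     (\<forall>x\<in>E. \<forall>y\<in>E. \<forall>z\<in>E. x \<noteq> y \<and> y \<noteq> z \<and> x \<noteq> z \<longrightarrow>
        msub (N x z) (mcp m cp (N x y) (N y z))) \<and>
     (\<forall>x\<in>E. \<forall>y\<in>E. x \<noteq> y \<longrightarrow> closed_proj m pr (N x y))"

(* inverse projection  \<check>pr_i^j : A_j \<rightarrow> A_i, defined on atoms by
   b \<subseteq> \<check>pr_i^j b' \<longleftrightarrow> b' \<subseteq> pr_i^j b, and extended to all elements by unions *)
definition ipr :: "(nat \<Rightarrow> 'b set) \<Rightarrow> (nat \<Rightarrow> nat \<Rightarrow> 'b set \<Rightarrow> 'b set) \<Rightarrow> nat \<Rightarrow> nat \<Rightarrow> 'b set \<Rightarrow> 'b set" where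
  "ipr At pr i j r = {b \<in> At i. \<exists>b'\<in>r. b' \<in> pr i j {b}}"

definition dpath :: "(nat \<times> nat) set \<Rightarrow> nat \<Rightarrow> nat \<Rightarrow> nat list \<Rightarrow> bool" where
  "dpath Ed v r p \<longleftrightarrow> p \<noteq> [] \<and> hd p = v \<and> last p = r \<and> distinct p \<and>
     (\<forall>l. Suc l < length p \<longrightarrow> (p ! l, p ! Suc l) \<in> Ed)"

definition anti_tree :: "nat set \<Rightarrow> (nat \<times> nat) set \<Rightarrow> nat \<Rightarrow> bool" where
  "anti_tree V Ed r \<longleftrightarrow> r \<in> V \<and> Ed \<subseteq> V \<times> V \<and>
     (\<forall>v\<in>V. v \<noteq> r \<longrightarrow> (\<exists>!p. dpath Ed v r p))"

(* oriented chain i = k_0 \<rightarrow> ... \<rightarrow> k_s \<leftarrow> ... \<leftarrow> k_{last} = j, given as the list ks and the peak index s *)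
definition ochain :: "(nat \<times> nat) set \<Rightarrow> nat \<Rightarrow> nat \<Rightarrow> nat list \<Rightarrow> nat \<Rightarrow> bool" where
  "ochain Ed i j ks s \<longleftrightarrow> ks \<noteq> [] \<and> hd ks = i \<and> last ks = j \<and> s < length ks \<and>
     (\<forall>l<s. (ks ! l, ks ! Suc l) \<in> Ed) \<and>
     (\<forall>l. s \<le> l \<and> Suc l < length ks \<longrightarrow> (ks ! Suc l, ks ! l) \<in> Ed)"

definition shortest_ochain :: "(nat \<times> nat) set \<Rightarrow> nat \<Rightarrow> nat \<Rightarrow> nat list \<Rightarrow> nat \<Rightarrow> bool" where
  "shortest_ochain Ed i j ks s \<longleftrightarrow> ochain Ed i j ks s \<and>
     (\<forall>ks' s'. ochain Ed i j ks' s' \<longrightarrow> length ks \<le> length ks')"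

fun upmap :: "(nat \<Rightarrow> nat \<Rightarrow> 'b set \<Rightarrow> 'b set) \<Rightarrow> nat list \<Rightarrow> 'b set \<Rightarrow> 'b set" where
  "upmap pr (k # k' # ks) x = upmap pr (k' # ks) (pr k k' x)"
| "upmap pr ks x = x"

fun downmap :: "(nat \<Rightarrow> 'b set) \<Rightarrow> (nat \<Rightarrow> nat \<Rightarrow> 'b set \<Rightarrow> 'b set) \<Rightarrow> nat list \<Rightarrow> 'b set \<Rightarrow> 'b set" where
  "downmap At pr (k # k' # ks) x = downmap At pr (k' # ks) (ipr At pr k' k x)"
| "downmap At pr ks x = x"

definition plenary :: "nat \<Rightarrow> (nat \<Rightarrow> 'b set) \<Rightarrow> (nat \<Rightarrow> nat \<Rightarrow> 'b set \<Rightarrow> 'b set) \<Rightarrow> (nat \<times> nat) set \<Rightarrow> bool" where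
  "plenary m At pr Ed \<longleftrightarrow> (\<exists>r. anti_tree {..<m} Ed r) \<and>
     (\<forall>i<m. \<forall>j<m. i \<noteq> j \<longrightarrow> (\<forall>ks s. shortest_ochain Ed i j ks s \<longrightarrow>
        (\<forall>b\<in>At i. downmap At pr (drop s ks) (upmap pr (take (Suc s) ks) {b}) \<subseteq> pr i j {b})))"

definition tree_multialg :: "nat \<Rightarrow> (nat \<Rightarrow> 'b set) \<Rightarrow> (nat \<Rightarrow> 'b set \<Rightarrow> 'b set) \<Rightarrow>
    (nat \<Rightarrow> 'b set \<Rightarrow> 'b set \<Rightarrow> 'b set) \<Rightarrow> (nat \<Rightarrow> 'b set) \<Rightarrow> (nat \<Rightarrow> nat \<Rightarrow> 'b set \<Rightarrow> 'b set) \<Rightarrow> bool" where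
  "tree_multialg m At cv cp e pr \<longleftrightarrow> multialg m At cv cp e pr \<and> (\<exists>Ed. plenary m At pr Ed)"

definition weakening :: "nat \<Rightarrow> (nat \<Rightarrow> 'b set) \<Rightarrow> (nat \<Rightarrow> 'b set \<Rightarrow> 'b set) \<Rightarrow>
    (nat \<Rightarrow> 'b set \<Rightarrow> 'b set \<Rightarrow> 'b set) \<Rightarrow> (nat \<Rightarrow> 'b set) \<Rightarrow>
    (nat \<Rightarrow> nat \<Rightarrow> 'b set \<Rightarrow> 'b set) \<Rightarrow> (nat \<Rightarrow> nat \<Rightarrow> 'b set \<Rightarrow> 'b set) \<Rightarrow> bool" where
  "weakening m At cv cp e pr pr' \<longleftrightarrow> multialg m At cv cp e pr \<and> multialg m At cv cp e pr' \<and>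
     (\<forall>i<m. \<forall>j<m. i \<noteq> j \<longrightarrow> (\<forall>b\<in>At i. pr i j {b} \<subseteq> pr' i j {b}))"

definition tree_weakening :: "nat \<Rightarrow> (nat \<Rightarrow> 'b set) \<Rightarrow> (nat \<Rightarrow> 'b set \<Rightarrow> 'b set) \<Rightarrow>
    (nat \<Rightarrow> 'b set \<Rightarrow> 'b set \<Rightarrow> 'b set) \<Rightarrow> (nat \<Rightarrow> 'b set) \<Rightarrow>
    (nat \<Rightarrow> nat \<Rightarrow> 'b set \<Rightarrow> 'b set) \<Rightarrow> (nat \<Rightarrow> nat \<Rightarrow> 'b set \<Rightarrow> 'b set) \<Rightarrow> bool" where
  "tree_weakening m At cv cp e pr pr' \<longleftrightarrow> weakening m At cv cp e pr pr' \<and>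
     tree_multialg m At cv cp e pr \<and>
     (\<exists>Ed. plenary m At pr Ed \<and>
        (\<forall>i j. (i, j) \<in> Ed \<and> i \<noteq> j \<longrightarrow> (\<forall>b\<in>At i. pr i j {b} = pr' i j {b})))"

end

theory Submission
  imports Defs
begin

(* A tree weakening shares the algebras, their operations, U and phi with the original
   formalism, so an algebraically closed scenario of the weakening is one of the original as
   soon as each of its (basic) relations R is closed under the original projections.  On the
   edges of the plenary anti-tree the two projections agree, so R is closed along tree edges.
   For arbitrary i, j follow the shortest oriented chain i -> ... -> k_s <- ... <- j: the atom
   of R_i is carried up to the atom of R_(k_s) by projections and down to the atom of R_j by
   inverse projections, and the plenary condition bounds the result by the projection of R_i. *)

lemma ochain_altdef:
  "ochain Ed i j ks s \<longleftrightarrow> s < length ks \<and> hd ks = i \<and> last ks = j \<and>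
     successively (\<lambda>a b. (a, b) \<in> Ed) (take (Suc s) ks) \<and>
     successively (\<lambda>a b. (b, a) \<in> Ed) (drop s ks)"
proof -
  have "(\<forall>l. s \<le> l \<and> Suc l < length ks \<longrightarrow> (ks ! Suc l, ks ! l) \<in> Ed) \<longleftrightarrow>
        (\<forall>t. Suc t < length ks - s \<longrightarrow> (ks ! (s + Suc t), ks ! (s + t)) \<in> Ed)"
  proof (intro iffI allI impI)
    fix t assume "\<forall>l. s \<le> l \<and> Suc l < length ks \<longrightarrow> (ks ! Suc l, ks ! l) \<in> Ed"
      and "Suc t < length ks - s"
    then show "(ks ! (s + Suc t), ks ! (s + t)) \<in> Ed" by (auto dest: spec[of _ "s + t"])
  next
    fix l assume "\<forall>t. Suc t < length ks - s \<longrightarrow> (ks ! (s + Suc t), ks ! (s + t)) \<in> Ed"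
      and "s \<le> l \<and> Suc l < length ks"
    then show "(ks ! Suc l, ks ! l) \<in> Ed" by (auto dest: spec[of _ "l - s"])
  qed
  then show ?thesis
    by (auto simp: ochain_def successively_conv_nth)
qed

lemma ochain_join:
  assumes "up \<noteq> []" "down \<noteq> []" "last up = hd down"
    and "successively (\<lambda>a b. (a, b) \<in> Ed) up" "successively (\<lambda>a b. (b, a) \<in> Ed) down"
  shows "ochain Ed (hd up) (last down) (butlast up @ down) (length up - 1)"
proof -
  have "take (Suc (length up - 1)) (butlast up @ down) = butlast up @ take 1 down"
    using assms(1) by (cases up) simp_all
  also have "\<dots> = up"
    using assms(1-3) by (metis One_nat_def append_butlast_last_id take0 take_Suc)
  finally have take_up: "take (Suc (length up - 1)) (butlast up @ down) = up" .
  then have "hd (butlast up @ down) = hd up"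
    by (metis hd_take zero_less_Suc)
  moreover have "drop (length up - 1) (butlast up @ down) = down"
    by simp
  ultimately show ?thesis
    using assms take_up by (auto simp: ochain_altdef)
qed

lemma ochain_remdups_adj:
  assumes "ochain Ed i j ks s"
  shows "\<exists>s'. ochain Ed i j (remdups_adj ks) s'"
proof -
  define up where "up = remdups_adj (take (Suc s) ks)"
  define down where "down = remdups_adj (drop s ks)"
  have s: "s < length ks" using assms by (simp add: ochain_altdef)
  have up: "up \<noteq> []" "last up = ks ! s"
    using s by (simp_all add: up_def take_Suc_conv_app_nth)
  have down: "down \<noteq> []" "hd down = ks ! s"
    using s by (simp_all add: down_def hd_drop_conv_nth)
  have "remdups_adj ks = up @ tl down"
    using remdups_adj_append[of "take s ks" "ks ! s" "drop (Suc s) ks"] s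
    by (simp add: up_def down_def id_take_nth_drop[symmetric] take_Suc_conv_app_nth Cons_nth_drop_Suc)
  also have "\<dots> = butlast up @ down"
    using up down by (metis append.assoc append_Cons append_Nil append_butlast_last_id list.collapse)
  finally have remdups_adj_ks: "remdups_adj ks = butlast up @ down" .
  have "hd up = i" "last down = j"
    using assms s by (simp_all add: ochain_altdef up_def down_def)
  moreover have "successively (\<lambda>a b. (a, b) \<in> Ed) up" "successively (\<lambda>a b. (b, a) \<in> Ed) down"
    using assms by (simp_all add: ochain_altdef up_def down_def successively_remdups_adjI)
  ultimately have "ochain Ed i j (butlast up @ down) (length up - 1)"
    using ochain_join[of up down Ed] up down by simp
  then show ?thesis
    using remdups_adj_ks by auto
qed

(* Nothing is known about pr k k, and an anti-tree may contain loops; shortest chains avoid them. *)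
lemma shortest_ochain_distinct_adj:
  assumes "shortest_ochain Ed i j ks s"
  shows "distinct_adj ks"
proof -
  have "length ks \<le> length (remdups_adj ks)"
    using assms ochain_remdups_adj unfolding shortest_ochain_def by blast
  then show ?thesis
    using remdups_adj_length[of ks] by (simp add: distinct_adj_conv_length_remdups_adj)
qed

lemma shortest_ochain_exists:
  assumes "ochain Ed i j ks s"
  shows "\<exists>ks s. shortest_ochain Ed i j ks s"
  using ex_has_least_nat[of "\<lambda>(ks, s). ochain Ed i j ks s" "(ks, s)" "\<lambda>(ks, s). length ks"] assms
  unfolding shortest_ochain_def by auto

lemma anti_tree_path_to_root:
  assumes "anti_tree V Ed r" "v \<in> V"
  obtains p where "p \<noteq> []" "hd p = v" "last p = r" "successively (\<lambda>a b. (a, b) \<in> Ed) p"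
proof (cases "v = r")
  case True
  then show ?thesis using that[of "[r]"] by simp
next
  case False
  then obtain p where "dpath Ed v r p" using assms unfolding anti_tree_def by blast
  then show ?thesis using that unfolding dpath_def successively_conv_nth by blast
qed

lemma anti_tree_ochain_exists:
  assumes "anti_tree V Ed r" "i \<in> V" "j \<in> V"
  shows "\<exists>ks s. ochain Ed i j ks s"
proof -
  obtain p where p: "p \<noteq> []" "hd p = i" "last p = r" "successively (\<lambda>a b. (a, b) \<in> Ed) p"
    using anti_tree_path_to_root[OF assms(1,2)] .
  obtain q where q: "q \<noteq> []" "hd q = j" "last q = r" "successively (\<lambda>a b. (a, b) \<in> Ed) q"
    using anti_tree_path_to_root[OF assms(1,3)] .
  show ?thesis
    using ochain_join[of p "rev q" Ed] p q by (auto simp: hd_rev last_rev)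
qed

lemma successively_conj:
  "successively P xs \<Longrightarrow> successively Q xs \<Longrightarrow> successively (\<lambda>x y. P x y \<and> Q x y) xs"
  by (induction P xs rule: successively.induct) auto

lemma projop_mono:
  assumes "projop Bi Bj cvi cvj p" "r \<subseteq> r'" "r' \<subseteq> Bi"
  shows "p r \<subseteq> p r'"
proof -
  have "p (r \<union> r') = p r \<union> p r'"
    using assms unfolding projop_def by (meson order_trans)
  moreover have "r \<union> r' = r'"
    using assms(2) by blast
  ultimately show ?thesis by auto
qed

lemma mem_upmap:
  assumes ma: "multialg m At cv cp e pr"
    and "successively (\<lambda>k k'. k < m \<and> k' < m \<and> k \<noteq> k' \<and> \<beta> k' \<in> pr k k' {\<beta> k}) ks"
    and "ks \<noteq> []" "x \<subseteq> At (hd ks)" "\<beta> (hd ks) \<in> x"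
  shows "\<beta> (last ks) \<in> upmap pr ks x"
  using assms(2-)
proof (induction ks arbitrary: x rule: induct_list012)
  case (3 k k' ks)
  then have step: "k < m" "k' < m" "k \<noteq> k'" "\<beta> k' \<in> pr k k' {\<beta> k}" by simp_all
  then have P: "projop (At k) (At k') (cv k) (cv k') (pr k k')"
    using ma by (simp add: multialg_def)
  have "pr k k' x \<subseteq> At k'"
    using P "3.prems"(3) by (simp add: projop_def)
  moreover have "\<beta> k' \<in> pr k k' x"
    using step(4) projop_mono[OF P, of "{\<beta> k}" x] "3.prems" by auto
  ultimately show ?case
    using "3.IH"(2) "3.prems"(1) by simp
qed simp_all

lemma mem_downmap:
  assumes "successively (\<lambda>k k'. \<beta> k' \<in> At k' \<and> \<beta> k \<in> pr k' k {\<beta> k'}) ks"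
    and "ks \<noteq> []" "\<beta> (hd ks) \<in> x"
  shows "\<beta> (last ks) \<in> downmap At pr ks x"
  using assms
proof (induction ks arbitrary: x rule: induct_list012)
  case (3 k k' ks)
  then have "\<beta> k' \<in> ipr At pr k' k x" by (auto simp: ipr_def)
  then show ?case
    using "3.IH"(2) "3.prems"(1) by simp
qed simp_all

lemma closed_proj_if_closed_on_tree_edges:
  assumes ma: "multialg m At cv cp e pr" and pl: "plenary m At pr Ed" and R: "mbasic m At R"
    and edges: "\<And>k k'. (k, k') \<in> Ed \<Longrightarrow> k \<noteq> k' \<Longrightarrow> k < m \<Longrightarrow> k' < m \<Longrightarrow> R k' \<subseteq> pr k k' (R k)"
  shows "closed_proj m pr R"
  unfolding closed_proj_def
proof (intro allI impI)
  fix i j assume i: "i < m" and j: "j < m" and "i \<noteq> j"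
  obtain \<beta> where \<beta>: "\<And>k. k < m \<Longrightarrow> R k = {\<beta> k} \<and> \<beta> k \<in> At k"
    using R unfolding mbasic_def by metis
  obtain r where tree: "anti_tree {..<m} Ed r"
    using pl unfolding plenary_def by blast
  have edge: "k < m \<and> k' < m \<and> \<beta> k' \<in> pr k k' {\<beta> k}" if "(k, k') \<in> Ed" "k \<noteq> k'" for k k'
  proof -
    have "k < m" "k' < m" using tree that(1) unfolding anti_tree_def by auto
    then show ?thesis using edges[OF that \<open>k < m\<close> \<open>k' < m\<close>] \<beta> by auto
  qed
  obtain ks s where "ochain Ed i j ks s"
    using anti_tree_ochain_exists[OF tree] i j by blast
  then obtain ks s where shortest: "shortest_ochain Ed i j ks s"
    using shortest_ochain_exists by blast
  then have chain: "ochain Ed i j ks s" and "distinct_adj ks"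
    using shortest_ochain_distinct_adj unfolding shortest_ochain_def by blast+
  define up where "up = take (Suc s) ks"
  define down where "down = drop s ks"
  have "distinct_adj up" "distinct_adj down"
    using \<open>distinct_adj ks\<close> distinct_adj_appendD1 distinct_adj_appendD2 append_take_drop_id
    unfolding up_def down_def by metis+
  have up: "up \<noteq> []" "hd up = i" "last up = ks ! s"
    using chain by (auto simp: ochain_altdef up_def hd_take simp del: take_Suc)
      (simp add: take_Suc_conv_app_nth)
  have down: "down \<noteq> []" "hd down = ks ! s" "last down = j"
    using chain by (auto simp: ochain_altdef down_def hd_drop_conv_nth)
  have "successively (\<lambda>k k'. (k, k') \<in> Ed \<and> k \<noteq> k') up"
    using chain \<open>distinct_adj up\<close> successively_conj
    unfolding ochain_altdef distinct_adj_def up_def by blast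
  then have "successively (\<lambda>k k'. k < m \<and> k' < m \<and> k \<noteq> k' \<and> \<beta> k' \<in> pr k k' {\<beta> k}) up"
    by (rule successively_mono) (use edge in blast)
  then have "\<beta> (ks ! s) \<in> upmap pr up {\<beta> i}"
    using mem_upmap[OF ma, of \<beta> up "{\<beta> i}"] up \<beta>[OF i] by simp
  moreover have "successively (\<lambda>k k'. (k', k) \<in> Ed \<and> k \<noteq> k') down"
    using chain \<open>distinct_adj down\<close> successively_conj
    unfolding ochain_altdef distinct_adj_def down_def by blast
  then have "successively (\<lambda>k k'. \<beta> k' \<in> At k' \<and> \<beta> k \<in> pr k' k {\<beta> k'}) down"
    by (rule successively_mono) (use edge \<beta> in blast)
  ultimately have "\<beta> j \<in> downmap At pr down (upmap pr up {\<beta> i})"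
    using mem_downmap[where ks = down] down by simp
  moreover have "downmap At pr down (upmap pr up {\<beta> i}) \<subseteq> pr i j {\<beta> i}"
    using pl i j \<open>i \<noteq> j\<close> shortest \<beta>[OF i] unfolding plenary_def up_def down_def by blast
  ultimately show "R j \<subseteq> pr i j (R i)"
    using \<beta>[OF i] \<beta>[OF j] by auto
qed

lemma tree_weakening_alg_closed:
  assumes tw: "tree_weakening m At cv cp e pr pr'"
    and N: "scenario m At cv E N" "alg_closed m cp pr' E N"
  shows "alg_closed m cp pr E N"
proof -
  obtain Ed where pl: "plenary m At pr Ed"
    and agree: "\<And>k k' b. (k, k') \<in> Ed \<Longrightarrow> k \<noteq> k' \<Longrightarrow> b \<in> At k \<Longrightarrow> pr k k' {b} = pr' k k' {b}"
    using tw unfolding tree_weakening_def by blast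
  have ma: "multialg m At cv cp e pr"
    using tw unfolding tree_weakening_def weakening_def by blast
  have "closed_proj m pr (N x y)" if "x \<in> E" "y \<in> E" "x \<noteq> y" for x y
  proof (rule closed_proj_if_closed_on_tree_edges[OF ma pl])
    show basic: "mbasic m At (N x y)"
      using N(1) that unfolding scenario_def by blast
    have closed': "closed_proj m pr' (N x y)"
      using N(2) that unfolding alg_closed_def by blast
    fix k k' assume "(k, k') \<in> Ed" "k \<noteq> k'" "k < m" "k' < m"
    moreover obtain b where "N x y k = {b}" "b \<in> At k"
      using basic \<open>k < m\<close> unfolding mbasic_def by blast
    ultimately show "N x y k' \<subseteq> pr k k' (N x y k)"
      using closed' agree unfolding closed_proj_def by metis
  qed
  then show ?thesis
    using N(2) unfolding alg_closed_def by blast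
qed

theorem proposition6p30:
  fixes m :: nat and At :: "nat \<Rightarrow> 'b set" and cv :: "nat \<Rightarrow> 'b set \<Rightarrow> 'b set"
    and cp :: "nat \<Rightarrow> 'b set \<Rightarrow> 'b set \<Rightarrow> 'b set" and e :: "nat \<Rightarrow> 'b set"
    and pr pr' :: "nat \<Rightarrow> nat \<Rightarrow> 'b set \<Rightarrow> 'b set"
    and U :: "'u set" and \<phi> :: "(nat \<Rightarrow> 'b set) \<Rightarrow> ('u \<times> 'u) set"
  assumes "seqf m At cv cp e pr U \<phi>"
    and "tree_weakening m At cv cp e pr pr'"
    and "\<forall>E N. scenario m At cv E N \<and> alg_closed m cp pr E N \<longrightarrow> satisfiable U \<phi> E N"
  shows "\<forall>E N. scenario m At cv E N \<and> alg_closed m cp pr' E N \<longrightarrow> satisfiable U \<phi> E N"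
  using tree_weakening_alg_closed[OF assms(2)] assms(3) by blast

end
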